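(* Let $n\ge2$, $1\le p\le n-1$, and let $\pi\in S_n$ be a $p$-resultant permutation such that $\pi^{\text{left}}$ has $i$ left-to-right maxima and $\pi^{\text{right}}$ has $j$ right-to-left minima. Then the number of configurations in $\mathcal{S}(n-1,p)$ that topple to $\pi$ is $\tfrac12 B_{i,j}$.
   Context: For $m\ge1$, $1\le p\le m$: sites are $0,\dots,m+1$; a configuration in $\mathcal{S}(m,p)$ places $m+1$ distinct chips labeled $1,\dots,m+1$ with sites $0,m+1$ empty, one chip at each site of $\{1,\dots,m\}\setminus\{p\}$ and two chips at site $p$. Toppling: while some site holds at least two chips, choose such a site $i$ and two chips $\alpha<\beta$ there and move $\alpha$ to $i-1$, $\beta$ to $i+1$. It is known this terminates with at most one chip per site and the final configuration is independent of the choices; reading labels left to right gives a permutation in $S_{m+1}$ to which the configuration topples. $\pi\in S_n$ is $p$-resultant if some configuration in $\mathcal{S}(n-1,p)$ topples to it; then $\pi^{\text{left}}=(\pi_1,\dots,\pi_{n-p})$ is a permutation of $[n-p]$ and $\pi^{\text{right}}=(\pi_{n-p+1},\dots,\pi_n)$ a permutation of $\{n-p+1,\dots,n\}$. Left-to-right maximum of $a_1\cdots a_k$: an entry $a_j=\max\{a_1,\dots,a_j\}$; right-to-left minimum: an entry $a_j=\min\{a_j,\dots,a_k\}$. Poly-Bernoulli numbers of type B: $\sum_{n\ge0}B_{n,k}\frac{x^n}{n!}=\frac{\mathrm{Li}_{-k}(1-e^{-x})}{1-e^{-x}}$ with $\mathrm{Li}_s(z)=\sum_{i\ge1}z^i/i^s$;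 equivalently $B_{n,k}=\sum_{m=0}^{\min(n,k)}(m!)^2\left\{{n+1\atop m+1}\right\}\left\{{k+1\atop m+1}\right\}$. *)

theory Defs
  imports Complex_Main "HOL-Combinatorics.Stirling" "HOL-Library.Multiset"
begin

text \<open>A labeled chip configuration with chips 1..m+1 is a list xs of length m+1 of
  integer sites: chip a sits at site xs ! (a - 1).\<close>

definition config_S :: "nat \<Rightarrow> nat \<Rightarrow> int list set" where
  "config_S m p = {xs. length xs = m + 1 \<and>
     (\<forall>s::int. card {a. a < m + 1 \<and> xs ! a = s} =
        (if s = int p then 2 else if 1 \<le> s \<and> s \<le> int m then 1 else 0))}"

definition topple_step :: "int list \<Rightarrow> int list \<Rightarrow> bool" where
  "topple_step xs ys \<longleftrightarrow> (\<exists>\<alpha> \<beta>. \<alpha> < \<beta> \<and> \<beta> < length xs \<and> xs ! \<alpha> = xs ! \<beta> \<and>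
      ys = xs[\<alpha> := xs ! \<alpha> - 1, \<beta> := xs ! \<beta> + 1])"

definition stable_config :: "int list \<Rightarrow> bool" where
  "stable_config xs \<longleftrightarrow> distinct xs"

definition read_perm :: "int list \<Rightarrow> nat list" where
  "read_perm xs = sort_key (\<lambda>a. xs ! (a - 1)) [1..<length xs + 1]"

definition topples_to :: "int list \<Rightarrow> nat list \<Rightarrow> bool" where
  "topples_to xs \<pi> \<longleftrightarrow> (\<exists>ys. topple_step\<^sup>*\<^sup>* xs ys \<and> stable_config ys \<and> read_perm ys = \<pi>)"

definition is_perm :: "nat \<Rightarrow> nat list \<Rightarrow> bool" where
  "is_perm n \<pi> \<longleftrightarrow> mset \<pi> = mset [1..<n + 1]"

definition p_resultant :: "nat \<Rightarrow> nat \<Rightarrow> nat list \<Rightarrow> bool" where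
  "p_resultant n p \<pi> \<longleftrightarrow> (\<exists>xs \<in> config_S (n - 1) p. topples_to xs \<pi>)"

definition ltr_maxima :: "nat list \<Rightarrow> nat" where
  "ltr_maxima xs = card {k. k < length xs \<and> xs ! k = Max (set (take (k + 1) xs))}"

definition rtl_minima :: "nat list \<Rightarrow> nat" where
  "rtl_minima xs = card {k. k < length xs \<and> xs ! k = Min (set (drop k xs))}"

definition poly_bernoulli_B :: "nat \<Rightarrow> nat \<Rightarrow> nat" where
  "poly_bernoulli_B n k = (\<Sum>m = 0..min n k.
      (fact m)^2 * Stirling (n + 1) (m + 1) * Stirling (k + 1) (m + 1))"

end

theory Submission
  imports Defs "HOL-Library.Confluence" "HOL-Combinatorics.Multiset_Permutations"
begin

text \<open>Write \<open>w\<close> for the word obtained by reading a configuration in \<open>config_S (n - 1) p\<close> from left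
  to right. Toppling is confluent on these configurations, and it acts on \<open>w\<close> like a sorting
  network: the chips on the sites \<open>1, \<dots>, p\<close>, from right to left, each travel through the
  chips to their right, and whenever two chips meet the smaller label stays behind. Hence the
  resulting permutation is a function of \<open>w\<close> alone. The words coming from configurations are
  exactly those in which the two chips on site \<open>p\<close> appear in increasing order; swapping them
  does not change the outcome, which accounts for the factor \<open>1/2\<close>. The words whose outcome has
  left part \<open>L\<close> and right part \<open>R\<close> are counted by peeling off the first letter of \<open>R\<close>: undoing
  one pass of a chip through \<open>L\<close> gives, for each \<open>k < i\<close>, \<open>i choose k\<close> lists with \<open>k + 1\<close>
  left-to-right maxima, besides \<open>L\<close> itself. This is the recurrence
  \<open>B(i, j + 1) = B(i, j) + \<Sum>k<i. (i choose k) B(k + 1, j)\<close> of the poly-Bernoulli numbers.\<close>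

section \<open>Poly-Bernoulli numbers\<close>

lemma sum_binomial_Suc:
  fixes G :: "nat \<Rightarrow> 'a::comm_semiring_1"
  shows "(\<Sum>k<Suc i. of_nat (Suc i choose k) * G k) =
    (\<Sum>k<i. of_nat (i choose k) * G (Suc k)) + (\<Sum>k<i. of_nat (i choose k) * G k) + G i"
proof -
  have "(\<Sum>k<Suc i. of_nat (Suc i choose k) * G k) = G 0 + (\<Sum>k<i. of_nat (Suc i choose Suc k) * G (Suc k))"
    by (subst sum.lessThan_Suc_shift) simp
  also have "\<dots> = G 0 + (\<Sum>k<i. of_nat (i choose Suc k) * G (Suc k)) + (\<Sum>k<i. of_nat (i choose k) * G (Suc k))"
    by (simp add: sum.distrib algebra_simps)
  also have "G 0 + (\<Sum>k<i. of_nat (i choose Suc k) * G (Suc k)) = (\<Sum>k<Suc i. of_nat (i choose k) * G k)"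
    by (subst sum.lessThan_Suc_shift) simp
  finally show ?thesis by (simp add: algebra_simps)
qed

lemma sum_binomial_Stirling:
  "(\<Sum>k<i. (i choose k) * Stirling (Suc (Suc k)) (Suc m)) =
    m * Stirling (Suc i) (Suc m) + (Suc m)^2 * Stirling (Suc i) (Suc (Suc m))"
proof (induction i arbitrary: m)
  case 0
  show ?case by (cases m) simp_all
next
  case (Suc i)
  let ?T = "\<lambda>m. \<Sum>k<i. (i choose k) * Stirling (Suc (Suc k)) m"
  define a b c where "a = Stirling (Suc i) m" and "b = Stirling (Suc i) (Suc m)"
    and "c = Stirling (Suc i) (Suc (Suc m))"
  have Sb: "Stirling (Suc (Suc i)) (Suc m) = Suc m * b + a"
    and Sc: "Stirling (Suc (Suc i)) (Suc (Suc m)) = Suc (Suc m) * c + b"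
    unfolding a_def b_def c_def by (rule Stirling.simps(4))+
  have "(\<Sum>k<Suc i. (Suc i choose k) * Stirling (Suc (Suc k)) (Suc m)) =
      (\<Sum>k<i. (i choose k) * Stirling (Suc (Suc (Suc k))) (Suc m)) + ?T (Suc m) + Stirling (Suc (Suc i)) (Suc m)"
    using sum_binomial_Suc[of i "\<lambda>k. Stirling (Suc (Suc k)) (Suc m)"] by simp
  also have "(\<Sum>k<i. (i choose k) * Stirling (Suc (Suc (Suc k))) (Suc m)) = Suc m * ?T (Suc m) + ?T m"
    by (simp only: Stirling.simps(4) sum.distrib sum_distrib_left algebra_simps)
  also have "?T (Suc m) = m * b + (Suc m)^2 * c"
    unfolding b_def c_def by (rule Suc.IH)
  finally have lhs: "(\<Sum>k<Suc i. (Suc i choose k) * Stirling (Suc (Suc k)) (Suc m)) =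
      Suc (Suc m) * (m * b + (Suc m)^2 * c) + (?T m + a) + Suc m * b"
    unfolding Sb by (simp add: algebra_simps)
  have "?T m + a = m * a + m^2 * b"
    using Suc.IH[of "m - 1"] unfolding a_def b_def by (cases m) (simp_all add: algebra_simps)
  then show ?case
    unfolding lhs Sb Sc by (simp del: Stirling.simps add: power2_eq_square algebra_simps)
qed

definition fact_Stirling :: "nat \<Rightarrow> nat \<Rightarrow> nat" where
  "fact_Stirling i m = fact m * Stirling (Suc i) (Suc m)"

lemma fact_Stirling_eq_0: "i < m \<Longrightarrow> fact_Stirling i m = 0"
  by (simp add: fact_Stirling_def)

lemma fact_Stirling_Suc_left:
  "fact_Stirling (Suc j) m = Suc m * fact_Stirling j m + (if m = 0 then 0 else m * fact_Stirling j (m - 1))"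
  by (cases m) (simp_all add: fact_Stirling_def algebra_simps)

lemma sum_binomial_fact_Stirling:
  "(\<Sum>k<i. (i choose k) * fact_Stirling (Suc k) m) =
    m * fact_Stirling i m + Suc m * fact_Stirling i (Suc m)"
proof -
  have "(\<Sum>k<i. (i choose k) * fact_Stirling (Suc k) m) =
      fact m * (\<Sum>k<i. (i choose k) * Stirling (Suc (Suc k)) (Suc m))"
    by (simp del: Stirling.simps add: fact_Stirling_def sum_distrib_left algebra_simps)
  then show ?thesis
    by (simp del: Stirling.simps add: sum_binomial_Stirling fact_Stirling_def power2_eq_square algebra_simps)
qed

lemma poly_bernoulli_B_conv_sum:
  assumes "i < K"
  shows "poly_bernoulli_B i j = (\<Sum>m<K. fact_Stirling i m * fact_Stirling j m)"
proof -
  have "poly_bernoulli_B i j = (\<Sum>m = 0..min i j. fact_Stirling i m * fact_Stirling j m)"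
    unfolding poly_bernoulli_B_def fact_Stirling_def
    by (simp del: Stirling.simps add: power2_eq_square algebra_simps)
  also have "\<dots> = (\<Sum>m<K. fact_Stirling i m * fact_Stirling j m)"
    using assms by (intro sum.mono_neutral_left) (auto simp: fact_Stirling_eq_0)
  finally show ?thesis .
qed

lemma poly_bernoulli_B_0_right: "poly_bernoulli_B i 0 = 1"
  by (simp del: Stirling.simps add: poly_bernoulli_B_def)

lemma poly_bernoulli_B_Suc_right:
  "poly_bernoulli_B i (Suc j) = poly_bernoulli_B i j + (\<Sum>k<i. (i choose k) * poly_bernoulli_B (Suc k) j)"
proof -
  let ?f = fact_Stirling
  have shift: "(\<Sum>m<Suc i. ?f i m * (if m = 0 then 0 else m * ?f j (m - 1))) =
      (\<Sum>m<Suc i. ?f i (Suc m) * Suc m * ?f j m)"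
    by (subst sum.lessThan_Suc_shift) (simp add: fact_Stirling_eq_0 algebra_simps)
  have "poly_bernoulli_B i (Suc j) = (\<Sum>m<Suc i. ?f i m * ?f (Suc j) m)"
    by (rule poly_bernoulli_B_conv_sum) simp
  also have "\<dots> = (\<Sum>m<Suc i. ?f j m * ?f i m)
      + (\<Sum>m<Suc i. ?f j m * (m * ?f i m + Suc m * ?f i (Suc m)))"
    using shift by (simp add: fact_Stirling_Suc_left sum.distrib algebra_simps)
  also have "(\<Sum>m<Suc i. ?f j m * (m * ?f i m + Suc m * ?f i (Suc m))) =
      (\<Sum>m<Suc i. \<Sum>k<i. (i choose k) * (?f (Suc k) m * ?f j m))"
    by (simp only: sum_binomial_fact_Stirling[symmetric] sum_distrib_left mult_ac)
  also have "\<dots> = (\<Sum>k<i. (i choose k) * (\<Sum>m<Suc i. ?f (Suc k) m * ?f j m))"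
    by (subst sum.swap) (simp only: sum_distrib_left)
  finally show ?thesis
    by (simp add: poly_bernoulli_B_conv_sum[of i "Suc i"] poly_bernoulli_B_conv_sum[of "Suc _" "Suc i"] mult.commute)
qed

section \<open>Bubbling\<close>

lemma finite_mset_eq: "finite {w. mset w = M}"
  using finite_permutations_of_multiset[of M] by (simp add: permutations_of_multiset_def)

lemma ltr_maxima_snoc:
  "ltr_maxima (xs @ [y]) = ltr_maxima xs + (if \<forall>a\<in>set xs. a \<le> y then 1 else 0)"
proof -
  let ?P = "\<lambda>ys k. ys ! k = Max (set (take (k + 1) ys))"
  have last: "?P (xs @ [y]) (length xs) \<longleftrightarrow> (\<forall>a\<in>set xs. a \<le> y)"
    by (auto intro: Max_eqI[symmetric] simp: eq_Max_iff)
  have "{k. k < length (xs @ [y]) \<and> ?P (xs @ [y]) k} =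
      {k. k < length xs \<and> ?P xs k} \<union> (if \<forall>a\<in>set xs. a \<le> y then {length xs} else {})"
    using last by (auto simp: nth_append less_Suc_eq)
  then show ?thesis
    unfolding ltr_maxima_def by (auto simp: card_insert_if)
qed

lemma rtl_minima_Cons:
  "rtl_minima (x # xs) = rtl_minima xs + (if \<forall>a\<in>set xs. x \<le> a then 1 else 0)"
proof -
  let ?P = "\<lambda>ys k. ys ! k = Min (set (drop k ys))"
  have first: "?P (x # xs) 0 \<longleftrightarrow> (\<forall>a\<in>set xs. x \<le> a)"
    by (auto intro: Min_eqI[symmetric] simp: eq_Min_iff)
  have "{k. k < length (x # xs) \<and> ?P (x # xs) k} =
      Suc ` {k. k < length xs \<and> ?P xs k} \<union> (if \<forall>a\<in>set xs. x \<le> a then {0} else {})"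
    using first by (auto simp: image_iff less_Suc_eq_0_disj)
  then show ?thesis
    unfolding rtl_minima_def by (auto simp: card_insert_if card_image)
qed

text \<open>If chip \<open>c\<close> shares a site with the first of the chips \<open>xs\<close>, which sit on consecutive
  sites, toppling moves the smaller label one site to the left and the larger one onto the next
  chip of \<open>xs\<close>, and so on: \<open>bubble c xs\<close> returns the labels left behind and the label that
  ends up one site beyond the last chip of \<open>xs\<close>.\<close>

fun bubble :: "'a::linorder \<Rightarrow> 'a list \<Rightarrow> 'a list \<times> 'a" where
  "bubble c [] = ([], c)"
| "bubble c (x # xs) = (min c x # fst (bubble (max c x) xs), snd (bubble (max c x) xs))"

lemma length_bubble [simp]: "length (fst (bubble v xs)) = length xs"
  by (induction xs arbitrary: v) auto

lemma mset_bubble: "mset (snd (bubble v xs) # fst (bubble v xs)) = mset (v # xs)"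
  by (induction xs arbitrary: v) (auto simp: max_def min_def add_mset_commute)

lemma bubble_carry_ge: "v \<le> snd (bubble v xs)"
  by (induction xs arbitrary: v) (auto intro: order_trans[OF max.cobounded1])

lemma le_bubble_carry: "a \<in> set xs \<Longrightarrow> a \<le> snd (bubble v xs)"
  by (induction xs arbitrary: v) (auto intro: order_trans[OF _ bubble_carry_ge])

lemma bubble_le_carry: "a \<in> set (fst (bubble v xs)) \<Longrightarrow> a \<le> snd (bubble v xs)"
  by (induction xs arbitrary: v)
    (auto intro: order_trans[OF _ bubble_carry_ge] simp: min_def max_def split: if_splits)

lemma bubble_dominated: "a \<in> set (fst (bubble v xs)) \<Longrightarrow> \<exists>b\<in>set xs. a \<le> b"
  by (induction xs arbitrary: v) (auto simp: min_def)

lemma bubble_of_max: "\<forall>a\<in>set xs. a \<le> v \<Longrightarrow> bubble v xs = (xs, v)"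
  by (induction xs arbitrary: v) (auto simp: max_def min_def)

lemma bubble_snoc:
  "bubble v (xs @ [z]) =
    (fst (bubble v xs) @ [min (snd (bubble v xs)) z], max (snd (bubble v xs)) z)"
  by (induction xs arbitrary: v) auto

definition bubble_preimage :: "'a::linorder list \<Rightarrow> 'a \<Rightarrow> ('a \<times> 'a list) set" where
  "bubble_preimage xs c = {(v, ys). bubble v ys = (xs, c)}"

lemma mset_bubble_preimage:
  "p \<in> bubble_preimage xs c \<Longrightarrow> mset (fst p # snd p) = mset (c # xs)"
  using mset_bubble[of "fst p" "snd p"] by (auto simp: bubble_preimage_def)

lemma set_snd_bubble_preimage: "p \<in> bubble_preimage xs c \<Longrightarrow> set (snd p) \<subseteq> set (c # xs)"
  using mset_eq_setD[OF mset_bubble_preimage] by fastforce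

lemma finite_bubble_preimage: "finite (bubble_preimage xs c)"
proof (rule finite_subset)
  show "bubble_preimage xs c \<subseteq> (\<lambda>w. (hd w, tl w)) ` {w. mset w = mset (c # xs)}"
  proof
    fix p assume "p \<in> bubble_preimage xs c"
    then show "p \<in> (\<lambda>w. (hd w, tl w)) ` {w. mset w = mset (c # xs)}"
      using mset_bubble_preimage[of p] by (intro image_eqI[of _ _ "fst p # snd p"]) auto
  qed
qed (simp add: finite_mset_eq)

lemma self_in_bubble_preimage: "\<forall>a\<in>set xs. a \<le> c \<Longrightarrow> (c, xs) \<in> bubble_preimage xs c"
  by (simp add: bubble_preimage_def bubble_of_max)

lemma bubble_preimage_cases:
  assumes "p \<in> bubble_preimage xs c"
  shows "p = (c, xs) \<or> c \<in> set (snd p)"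
proof (cases "fst p = c")
  case True
  with assms have "bubble c (snd p) = (xs, c)"
    by (auto simp: bubble_preimage_def)
  moreover have "bubble c (snd p) = (snd p, c)"
    using le_bubble_carry[of _ "snd p" c] \<open>bubble c (snd p) = (xs, c)\<close> by (intro bubble_of_max) auto
  ultimately show ?thesis using True by (simp add: prod_eq_iff)
next
  case False
  then show ?thesis
    using mset_bubble_preimage[OF assms] by (metis list.set_intros(1) set_ConsD mset_eq_setD)
qed

lemma bubble_preimage_empty: "\<not> (\<forall>a\<in>set xs. a \<le> c) \<Longrightarrow> bubble_preimage xs c = {}"
proof -
  assume "\<not> (\<forall>a\<in>set xs. a \<le> c)"
  then have "bubble v ys \<noteq> (xs, c)" for v ys
    using bubble_le_carry[of _ v ys] by auto
  then show ?thesis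
    unfolding bubble_preimage_def by auto
qed

lemma bubble_preimage_Nil: "bubble_preimage [] c = {(c, [])}"
proof -
  have "bubble v ys = ([], c) \<longleftrightarrow> ys = [] \<and> v = c" for v ys
    by (cases ys) auto
  then show ?thesis
    unfolding bubble_preimage_def by auto
qed

lemma bubble_preimage_snoc:
  assumes "y < c"
  shows "bubble_preimage (xs @ [y]) c =
    (\<lambda>p. (fst p, snd p @ [c])) ` bubble_preimage xs y \<union> (\<lambda>p. (fst p, snd p @ [y])) ` bubble_preimage xs c"
proof (intro equalityI subsetI)
  fix p assume "p \<in> bubble_preimage (xs @ [y]) c"
  then obtain v ys' where p: "p = (v, ys')" and P: "bubble v ys' = (xs @ [y], c)"
    unfolding bubble_preimage_def by auto
  have "length ys' = Suc (length xs)"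
    using length_bubble[of v ys'] P by simp
  then obtain ys z where ys': "ys' = ys @ [z]"
    by (metis length_Suc_conv_rev)
  have "fst (bubble v ys) = xs" "min (snd (bubble v ys)) z = y" "max (snd (bubble v ys)) z = c"
    using P unfolding ys' bubble_snoc by auto
  then have "(v, ys) \<in> bubble_preimage xs y \<and> z = c \<or> (v, ys) \<in> bubble_preimage xs c \<and> z = y"
    unfolding bubble_preimage_def by (auto simp: prod_eq_iff min_def max_def split: if_splits)
  then show "p \<in> (\<lambda>p. (fst p, snd p @ [c])) ` bubble_preimage xs y \<union>
      (\<lambda>p. (fst p, snd p @ [y])) ` bubble_preimage xs c"
    unfolding p ys' by (force intro: rev_image_eqI[of "(v, ys)"])
next
  fix p assume "p \<in> (\<lambda>p. (fst p, snd p @ [c])) ` bubble_preimage xs y \<union>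
      (\<lambda>p. (fst p, snd p @ [y])) ` bubble_preimage xs c"
  then show "p \<in> bubble_preimage (xs @ [y]) c"
    using assms unfolding bubble_preimage_def by (auto simp: bubble_snoc min_def max_def)
qed

lemma sum_bubble_preimage_snoc:
  assumes "y < c"
  shows "(\<Sum>p\<in>bubble_preimage (xs @ [y]) c. G (snd p)) =
    (\<Sum>p\<in>bubble_preimage xs y. G (snd p @ [c])) + (\<Sum>p\<in>bubble_preimage xs c. G (snd p @ [y]))"
proof -
  let ?A = "(\<lambda>p. (fst p, snd p @ [c])) ` bubble_preimage xs y"
  let ?B = "(\<lambda>p. (fst p, snd p @ [y])) ` bubble_preimage xs c"
  have "?A \<inter> ?B = {}"
    using assms by auto
  then have "(\<Sum>p\<in>bubble_preimage (xs @ [y]) c. G (snd p)) = (\<Sum>p\<in>?A. G (snd p)) + (\<Sum>p\<in>?B. G (snd p))"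
    unfolding bubble_preimage_snoc[OF assms] by (intro sum.union_disjoint) (auto simp: finite_bubble_preimage)
  also have "(\<Sum>p\<in>?A. G (snd p)) = (\<Sum>p\<in>bubble_preimage xs y. G (snd p @ [c]))"
    by (subst sum.reindex) (auto simp: inj_on_def prod_eq_iff)
  also have "(\<Sum>p\<in>?B. G (snd p)) = (\<Sum>p\<in>bubble_preimage xs c. G (snd p @ [y]))"
    by (subst sum.reindex) (auto simp: inj_on_def prod_eq_iff)
  finally show ?thesis .
qed

lemma ltr_maxima_snoc_bubble_preimage_above:
  assumes "p \<in> bubble_preimage xs y" and "y \<le> c"
  shows "ltr_maxima (snd p @ [c]) = Suc (ltr_maxima (snd p))"
proof -
  have "\<forall>b\<in>set (snd p). b \<le> c"
    using assms le_bubble_carry[of _ "snd p" "fst p"] by (fastforce simp: bubble_preimage_def)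
  then show ?thesis
    by (simp add: ltr_maxima_snoc)
qed

lemma sum_bubble_preimage_snoc_below:
  assumes "y < c" and "\<forall>a\<in>set xs. a \<le> c"
  shows "(\<Sum>p\<in>bubble_preimage xs c. F (ltr_maxima (snd p @ [y]))) =
    F (ltr_maxima (xs @ [y])) + (\<Sum>p\<in>bubble_preimage xs c - {(c, xs)}. F (ltr_maxima (snd p)))"
proof -
  have "ltr_maxima (snd p @ [y]) = ltr_maxima (snd p)" if "p \<in> bubble_preimage xs c - {(c, xs)}" for p
  proof -
    have "\<exists>b\<in>set (snd p). \<not> b \<le> y"
      using that bubble_preimage_cases[of p xs c] assms(1) by (auto simp: not_le)
    then show ?thesis
      by (auto simp: ltr_maxima_snoc)
  qed
  then show ?thesis
    using assms(2) by (simp add: sum.remove[OF finite_bubble_preimage self_in_bubble_preimage])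
qed

lemma sum_bubble_preimage_ltr_maxima:
  assumes "distinct xs" and "\<forall>a\<in>set xs. a < c"
  shows "(\<Sum>p\<in>bubble_preimage xs c. F (ltr_maxima (snd p))) =
    F (ltr_maxima xs) + (\<Sum>k<ltr_maxima xs. (ltr_maxima xs choose k) * F (Suc k))"
  using assms
proof (induction xs arbitrary: c F rule: rev_induct)
  case Nil
  then show ?case by (simp add: bubble_preimage_Nil ltr_maxima_def)
next
  case (snoc y xs)
  let ?i = "ltr_maxima xs"
  have yc: "y < c" and dxs: "distinct xs" and xsc: "\<forall>a\<in>set xs. a < c"
    using snoc.prems by auto
  have xs_le: "\<forall>a\<in>set xs. a \<le> c"
    using xsc by auto
  then have "(c, xs) \<in> bubble_preimage xs c"
    by (rule self_in_bubble_preimage)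
  then have "(\<Sum>p\<in>bubble_preimage xs c - {(c, xs)}. F (ltr_maxima (snd p))) =
      (\<Sum>k<?i. (?i choose k) * F (Suc k))"
    using snoc.IH[OF dxs xsc, of F] by (simp add: sum.remove[OF finite_bubble_preimage])
  then have below: "(\<Sum>p\<in>bubble_preimage xs c. F (ltr_maxima (snd p @ [y]))) =
      F (ltr_maxima (xs @ [y])) + (\<Sum>k<?i. (?i choose k) * F (Suc k))"
    using sum_bubble_preimage_snoc_below[OF yc xs_le, of F] by simp
  show ?case
  proof (cases "\<forall>a\<in>set xs. a \<le> y")
    case False
    then have "bubble_preimage xs y = {}" and "ltr_maxima (xs @ [y]) = ?i"
      by (simp_all add: bubble_preimage_empty ltr_maxima_snoc)
    then show ?thesis
      using below sum_bubble_preimage_snoc[OF yc, of "\<lambda>ys. F (ltr_maxima ys)"] by simp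
  next
    case True
    then have xsy: "\<forall>a\<in>set xs. a < y"
      using snoc.prems(1) by (auto simp: le_less)
    have "(\<Sum>p\<in>bubble_preimage xs y. F (ltr_maxima (snd p @ [c]))) =
        (\<Sum>p\<in>bubble_preimage xs y. F (Suc (ltr_maxima (snd p))))"
      using ltr_maxima_snoc_bubble_preimage_above yc by (intro sum.cong) auto
    also have "\<dots> = F (Suc ?i) + (\<Sum>k<?i. (?i choose k) * F (Suc (Suc k)))"
      using snoc.IH[OF dxs xsy, of "\<lambda>u. F (Suc u)"] .
    moreover have "ltr_maxima (xs @ [y]) = Suc ?i"
      using True by (simp add: ltr_maxima_snoc)
    ultimately show ?thesis
      using below sum_bubble_preimage_snoc[OF yc, of "\<lambda>ys. F (ltr_maxima ys)"]
        sum_binomial_Suc[where 'a = nat, of ?i "\<lambda>k. F (Suc k)"]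
      by simp
  qed
qed

fun bubbles :: "'a::linorder list \<Rightarrow> 'a list \<Rightarrow> 'a list \<times> 'a list" where
  "bubbles [] ys = (ys, [])"
| "bubbles (v # xs) ys =
    (fst (bubble v (fst (bubbles xs ys))), snd (bubble v (fst (bubbles xs ys))) # snd (bubbles xs ys))"

definition bubble_split :: "nat \<Rightarrow> 'a::linorder list \<Rightarrow> 'a list \<times> 'a list" where
  "bubble_split q w = bubbles (take q w) (drop q w)"

lemma length_bubbles_fst [simp]: "length (fst (bubbles xs ys)) = length ys"
  by (induction xs) auto

lemma mset_bubbles: "mset (fst (bubbles xs ys) @ snd (bubbles xs ys)) = mset (xs @ ys)"
proof (induction xs)
  case (Cons v xs)
  let ?F = "fst (bubbles xs ys)" and ?S = "snd (bubbles xs ys)"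
  have "mset (fst (bubbles (v # xs) ys) @ snd (bubbles (v # xs) ys)) =
      mset (snd (bubble v ?F) # fst (bubble v ?F)) + mset ?S"
    by simp
  also have "\<dots> = mset (v # ?F) + mset ?S"
    by (simp only: mset_bubble)
  also have "\<dots> = mset ((v # xs) @ ys)"
    using Cons.IH by simp
  finally show ?case .
qed simp

lemma bubbles_le: "a \<in> set (fst (bubbles xs ys)) \<Longrightarrow> b \<in> set (snd (bubbles xs ys)) \<Longrightarrow> a \<le> b"
proof (induction xs arbitrary: a b)
  case (Cons v xs)
  then have a: "a \<in> set (fst (bubble v (fst (bubbles xs ys))))" by simp
  show ?case
  proof (cases "b = snd (bubble v (fst (bubbles xs ys)))")
    case True
    then show ?thesis using bubble_le_carry[OF a] by simp
  next
    case False
    then have "b \<in> set (snd (bubbles xs ys))"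
      using Cons.prems(2) by simp
    moreover obtain c where "c \<in> set (fst (bubbles xs ys))" and "a \<le> c"
      using bubble_dominated[OF a] by blast
    ultimately show ?thesis
      using Cons.IH by (blast intro: order_trans)
  qed
qed simp

lemma bubble_split_0 [simp]: "bubble_split 0 w = (w, [])"
  by (simp add: bubble_split_def)

lemma bubble_split_Suc:
  "bubble_split (Suc q) (v # w) =
    (fst (bubble v (fst (bubble_split q w))), snd (bubble v (fst (bubble_split q w))) # snd (bubble_split q w))"
  by (simp add: bubble_split_def)

lemma mset_bubble_split: "mset (fst (bubble_split q w) @ snd (bubble_split q w)) = mset w"
  unfolding bubble_split_def mset_bubbles by simp

lemma bubble_split_less:
  assumes "bubble_split q w = (L, R)" and "distinct w"
  shows "\<forall>a\<in>set L. \<forall>b\<in>set R. a < b"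
proof (intro ballI)
  fix a b assume "a \<in> set L" and "b \<in> set R"
  moreover have "distinct (L @ R)"
    using mset_bubble_split[of q w] mset_eq_imp_distinct_iff[of "L @ R" w] assms by simp
  moreover have "a \<le> b"
    using bubbles_le[of a "take q w" "drop q w" b] assms(1) \<open>a \<in> set L\<close> \<open>b \<in> set R\<close>
    by (simp add: bubble_split_def)
  ultimately show "a < b"
    by (auto simp: le_less)
qed

lemma finite_bubble_split_fiber: "finite {w. bubble_split q w = (L, R)}"
proof (rule finite_subset)
  show "{w. bubble_split q w = (L, R)} \<subseteq> {w. mset w = mset (L @ R)}"
  proof
    fix w assume "w \<in> {w. bubble_split q w = (L, R)}"
    then show "w \<in> {w. mset w = mset (L @ R)}"
      using mset_bubble_split[of q w] by simp
  qed
qed (rule finite_mset_eq)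

lemma bubble_split_fiber_Suc:
  "{w. bubble_split (Suc q) w = (L, x # R)} =
    (\<Union>p\<in>bubble_preimage L x. (#) (fst p) ` {w. bubble_split q w = (snd p, R)})"
proof (intro equalityI subsetI)
  fix w assume w: "w \<in> {w. bubble_split (Suc q) w = (L, x # R)}"
  then obtain v w' where vw: "w = v # w'"
    by (cases w) (auto simp: bubble_split_def)
  let ?ys = "fst (bubble_split q w')"
  have "bubble_split (Suc q) (v # w') = (L, x # R)"
    using w vw by simp
  then have "bubble v ?ys = (L, x)" and R: "snd (bubble_split q w') = R"
    unfolding bubble_split_Suc by (auto simp: prod_eq_iff)
  then have "(v, ?ys) \<in> bubble_preimage L x"
    by (simp add: bubble_preimage_def)
  moreover have "w \<in> (#) v ` {w. bubble_split q w = (?ys, R)}"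
    using R unfolding vw by (simp add: prod_eq_iff)
  ultimately show "w \<in> (\<Union>p\<in>bubble_preimage L x. (#) (fst p) ` {w. bubble_split q w = (snd p, R)})"
    by force
next
  fix w assume "w \<in> (\<Union>p\<in>bubble_preimage L x. (#) (fst p) ` {w. bubble_split q w = (snd p, R)})"
  then show "w \<in> {w. bubble_split (Suc q) w = (L, x # R)}"
    by (auto simp: bubble_split_Suc bubble_preimage_def)
qed

lemma card_bubble_split_fiber_Suc:
  "card {w. bubble_split (Suc q) w = (L, x # R)} =
    (\<Sum>p\<in>bubble_preimage L x. card {w. bubble_split q w = (snd p, R)})"
proof -
  have "card (\<Union>p\<in>bubble_preimage L x. (#) (fst p) ` {w. bubble_split q w = (snd p, R)}) =
      (\<Sum>p\<in>bubble_preimage L x. card ((#) (fst p) ` {w. bubble_split q w = (snd p, R)}))"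
    by (rule card_UN_disjoint) (auto simp: finite_bubble_preimage finite_bubble_split_fiber)
  then show ?thesis
    unfolding bubble_split_fiber_Suc by (simp add: card_image)
qed

lemma bubble_split_fiber_empty:
  assumes "distinct (L @ R)" and "\<not> (\<forall>a\<in>set L. \<forall>b\<in>set R. a < b)"
  shows "{w. bubble_split q w = (L, R)} = {}"
proof (intro equals0I)
  fix w assume "w \<in> {w. bubble_split q w = (L, R)}"
  then have w: "bubble_split q w = (L, R)"
    by simp
  then have "distinct w"
    using mset_bubble_split[of q w] mset_eq_imp_distinct_iff[of "L @ R" w] assms(1) by simp
  then show False
    using assms(2) bubble_split_less[OF w] by blast
qed

lemma card_bubble_split_fiber_Suc_eq_sum:
  assumes "distinct (x # L @ R)"
    and "\<And>ys. distinct (ys @ R) \<Longrightarrow> \<forall>a\<in>set ys. \<forall>b\<in>set R. a < b \<Longrightarrow>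
      card {w. bubble_split q w = (ys, R)} = f ys"
  shows "card {w. bubble_split (Suc q) w = (L, x # R)} =
    (\<Sum>p\<in>{p \<in> bubble_preimage L x. \<forall>a\<in>set (snd p). \<forall>b\<in>set R. a < b}. f (snd p))"
  unfolding card_bubble_split_fiber_Suc sum.inter_filter[OF finite_bubble_preimage]
proof (rule sum.cong[OF refl])
  fix p assume p: "p \<in> bubble_preimage L x"
  have "distinct (snd p)"
    using mset_eq_imp_distinct_iff[OF mset_bubble_preimage[OF p]] assms(1) by auto
  then have "distinct (snd p @ R)"
    using set_snd_bubble_preimage[OF p] assms(1) by auto
  then show "card {w. bubble_split q w = (snd p, R)} =
      (if \<forall>a\<in>set (snd p). \<forall>b\<in>set R. a < b then f (snd p) else 0)"
    using assms(2) bubble_split_fiber_empty[of "snd p" R q] by auto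
qed

lemma card_bubble_split_fiber:
  assumes "length R = q" and "distinct (L @ R)" and "\<forall>a\<in>set L. \<forall>b\<in>set R. a < b"
  shows "card {w. bubble_split q w = (L, R)} = poly_bernoulli_B (ltr_maxima L) (rtl_minima R)"
  using assms
proof (induction q arbitrary: L R)
  case 0
  then have "{w. bubble_split 0 w = (L, R)} = {L}"
    by auto
  then show ?case
    using 0 by (simp add: rtl_minima_def poly_bernoulli_B_0_right)
next
  case (Suc q)
  then obtain x R' where R: "R = x # R'"
    by (cases R) auto
  let ?i = "ltr_maxima L" and ?j = "rtl_minima R'"
  let ?below = "{p \<in> bubble_preimage L x. \<forall>a\<in>set (snd p). \<forall>b\<in>set R'. a < b}"
  have xL: "\<forall>a\<in>set L. a < x" and dxL: "distinct (x # L)"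
    using Suc.prems R by auto
  have sum: "card {w. bubble_split (Suc q) w = (L, R)} =
      (\<Sum>p\<in>?below. poly_bernoulli_B (ltr_maxima (snd p)) ?j)"
    unfolding R using Suc.prems R Suc.IH[of R'] by (intro card_bubble_split_fiber_Suc_eq_sum) auto
  show ?case
  proof (cases "\<forall>b\<in>set R'. x \<le> b")
    case True
    then have "\<forall>a\<in>set (x # L). \<forall>b\<in>set R'. a < b"
      using Suc.prems(2,3) R by (auto simp: le_less)
    then have "?below = bubble_preimage L x"
      using set_snd_bubble_preimage by blast
    then have "card {w. bubble_split (Suc q) w = (L, R)} = poly_bernoulli_B ?i (Suc ?j)"
      using sum sum_bubble_preimage_ltr_maxima[of L x "\<lambda>u. poly_bernoulli_B u ?j"] dxL xL
      by (simp add: poly_bernoulli_B_Suc_right)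
    then show ?thesis
      using True R by (simp add: rtl_minima_Cons)
  next
    case False
    then have "?below = {(x, L)}"
      using bubble_preimage_cases[of _ L x] self_in_bubble_preimage[of L x] xL Suc.prems(3) R
      by fastforce
    then show ?thesis
      using sum R by (simp add: rtl_minima_Cons if_not_P[OF False])
  qed
qed

section \<open>Confluence of toppling\<close>

lemma card_nth_eq_count: "card {a. a < length xs \<and> xs ! a = s} = count (mset xs) s"
proof -
  have "count (mset xs) s = length (filter ((=) s) xs)"
    by (simp add: count_mset count_list_eq_length_filter)
  also have "\<dots> = card {a. a < length xs \<and> xs ! a = s}"
    by (simp add: length_filter_conv_card eq_commute)
  finally show ?thesis ..
qed

text \<open>The invariant that makes toppling confluent; \<open>c\<close> counts the chips on each site.\<close>

definition doubles_separated :: "(int \<Rightarrow> nat) \<Rightarrow> bool" where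
  "doubles_separated c \<longleftrightarrow> (\<forall>t. c t \<le> 2) \<and>
     (\<forall>a b. a < b \<and> c a = 2 \<and> c b = 2 \<longrightarrow> (\<exists>u. a < u \<and> u < b \<and> c u = 0))"

lemma doubles_separatedD:
  assumes "doubles_separated c"
  shows "c t \<le> 2" and "a < b \<Longrightarrow> c a = 2 \<Longrightarrow> c b = 2 \<Longrightarrow> \<exists>u. a < u \<and> u < b \<and> c u = 0"
  using assms unfolding doubles_separated_def by blast+

lemma doubles_separated_neighbours:
  assumes "doubles_separated c" and "c s = 2"
  shows "c (s - 1) \<le> 1" and "c (s + 1) \<le> 1"
proof -
  have "c (s - 1) \<noteq> 2" and "c (s + 1) \<noteq> 2"
    using doubles_separatedD(2)[OF assms(1), of "s - 1" s] doubles_separatedD(2)[OF assms(1), of s "s + 1"]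
      assms(2) by auto
  then show "c (s - 1) \<le> 1" and "c (s + 1) \<le> 1"
    using doubles_separatedD(1)[OF assms(1), of "s - 1"] doubles_separatedD(1)[OF assms(1), of "s + 1"]
    by linarith+
qed

context
  fixes c c' :: "int \<Rightarrow> nat" and s :: int
  assumes separated: "doubles_separated c" and double: "c s = 2"
    and topple: "\<And>t. c' t = (if t = s then 0 else if t = s - 1 \<or> t = s + 1 then c t + 1 else c t)"
begin

lemma topple_gap_below:
  assumes "a < b" and "b < s" and "c' a = 2" and "c' b = 2"
  shows "\<exists>u. a < u \<and> u < b \<and> c' u = 0"
proof -
  let ?b = "if b = s - 1 then s else b"
  have "c a = 2" "c ?b = 2" "a < ?b"
    using assms topple[of a] topple[of b] double by (auto split: if_splits)
  then obtain u where u: "a < u" "u < ?b" "c u = 0"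
    using doubles_separatedD(2)[OF separated] by blast
  moreover have "u \<noteq> s - 1"
    using u assms(2,4) topple[of b] by (auto split: if_splits)
  ultimately have "u < b" and "c' u = 0"
    using topple[of u] assms(2) by (auto split: if_splits)
  then show ?thesis
    using u(1) by blast
qed

lemma topple_gap_above:
  assumes "a < b" and "s < a" and "c' a = 2" and "c' b = 2"
  shows "\<exists>u. a < u \<and> u < b \<and> c' u = 0"
proof -
  let ?a = "if a = s + 1 then s else a"
  have "c ?a = 2" "c b = 2" "?a < b"
    using assms topple[of a] topple[of b] double by (auto split: if_splits)
  then obtain u where u: "?a < u" "u < b" "c u = 0"
    using doubles_separatedD(2)[OF separated] by blast
  moreover have "u \<noteq> s + 1"
    using u assms(2,3) topple[of a] by (auto split: if_splits)
  ultimately have "a < u" and "c' u = 0"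
    using topple[of u] assms(2) by (auto split: if_splits)
  then show ?thesis
    using u(2) by blast
qed

lemma doubles_separated_topple: "doubles_separated c'"
proof -
  have "c' t \<le> 2" for t
    using topple[of t] doubles_separatedD(1)[OF separated, of t] doubles_separated_neighbours[OF separated double]
    by auto
  moreover have "\<exists>u. a < u \<and> u < b \<and> c' u = 0" if ab: "a < b" "c' a = 2" "c' b = 2" for a b
  proof -
    have "a \<noteq> s" "b \<noteq> s"
      using ab topple by auto
    then consider "a < s" "s < b" | "b < s" | "s < a"
      using \<open>a < b\<close> by linarith
    then show ?thesis
    proof cases
      case 1
      then show ?thesis using topple[of s] by auto
    qed (use topple_gap_below topple_gap_above ab in blast)+
  qed
  ultimately show ?thesis
    unfolding doubles_separated_def by blast
qed

end

lemma mset_topple_step: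
  fixes xs :: "int list"
  assumes "\<alpha> < \<beta>" and "\<beta> < length xs" and "xs ! \<alpha> = s" and "xs ! \<beta> = s"
  shows "{#s, s#} \<subseteq># mset xs"
    and "mset (xs[\<alpha> := s - 1, \<beta> := s + 1]) = mset xs - {#s, s#} + {#s - 1, s + 1#}"
proof -
  have 1: "mset (xs[\<alpha> := s - 1]) = add_mset (s - 1) (mset xs - {#s#})"
    using mset_update[of \<alpha> xs "s - 1"] assms by simp
  have 2: "mset (xs[\<alpha> := s - 1, \<beta> := s + 1]) = add_mset (s + 1) (mset (xs[\<alpha> := s - 1]) - {#s#})"
    using mset_update[of \<beta> "xs[\<alpha> := s - 1]" "s + 1"] assms by simp
  have "card {\<alpha>, \<beta>} \<le> card {a. a < length xs \<and> xs ! a = s}"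
    using assms by (intro card_mono) auto
  then have "2 \<le> count (mset xs) s"
    using assms(1) by (simp add: card_nth_eq_count)
  then show "{#s, s#} \<subseteq># mset xs"
    by (simp add: subseteq_mset_def)
  then show "mset (xs[\<alpha> := s - 1, \<beta> := s + 1]) = mset xs - {#s, s#} + {#s - 1, s + 1#}"
    unfolding 2 1 by (auto simp: multiset_eq_iff)
qed

definition topple_inv :: "int list \<Rightarrow> bool" where
  "topple_inv xs \<longleftrightarrow> doubles_separated (count (mset xs))"

lemma topple_inv_step:
  assumes "topple_inv xs" and "topple_step xs ys"
  shows "topple_inv ys"
proof -
  obtain \<alpha> \<beta> where ab: "\<alpha> < \<beta>" "\<beta> < length xs" "xs ! \<alpha> = xs ! \<beta>"
    and ys: "ys = xs[\<alpha> := xs ! \<alpha> - 1, \<beta> := xs ! \<beta> + 1]"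
    using assms(2) unfolding topple_step_def by blast
  define s where "s = xs ! \<beta>"
  have s: "xs ! \<alpha> = s" "xs ! \<beta> = s"
    using ab(3) by (simp_all add: s_def)
  note step = mset_topple_step[OF ab(1,2) s]
  let ?M = "mset xs"
  have le2: "count ?M s \<le> 2"
    using assms(1) doubles_separatedD(1) unfolding topple_inv_def by blast
  have "doubles_separated (count (?M - {#s, s#} + {#s - 1, s + 1#}))"
  proof (rule doubles_separated_topple)
    show "doubles_separated (count ?M)"
      using assms(1) unfolding topple_inv_def .
    show "count ?M s = 2"
      using le2 mset_subset_eq_count[OF step(1), of s] by simp
    show "count (?M - {#s, s#} + {#s - 1, s + 1#}) t =
        (if t = s then 0 else if t = s - 1 \<or> t = s + 1 then count ?M t + 1 else count ?M t)" for t
      using le2 mset_subset_eq_count[OF step(1), of s] by auto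
  qed
  then show ?thesis
    unfolding topple_inv_def ys s step(2) .
qed

lemma topple_inv_steps: "topple_step\<^sup>*\<^sup>* xs ys \<Longrightarrow> topple_inv xs \<Longrightarrow> topple_inv ys"
  by (induction rule: rtranclp_induct) (auto intro: topple_inv_step)

lemma index_pair_unique:
  assumes "count (mset xs) s \<le> 2"
    and "i < j" "j < length xs" "xs ! i = s" "xs ! j = s"
    and "i' < j'" "j' < length xs" "xs ! i' = s" "xs ! j' = s"
  shows "i = i' \<and> j = j'"
proof -
  let ?S = "{a. a < length xs \<and> xs ! a = s}"
  have "{i, j} = ?S"
  proof (rule card_seteq)
    show "{i, j} \<subseteq> ?S"
      using assms by simp
    show "card ?S \<le> card {i, j}"
      using assms(1,2) by (simp add: card_nth_eq_count)
  qed simp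
  then have "i' \<in> {i, j}" "j' \<in> {i, j}"
    using assms by auto
  then show ?thesis
    using assms(2,6) by auto
qed

lemma topple_steps_commute:
  assumes ab: "a < b" "b < length xs" "xs ! a = s" "xs ! b = s"
    and ab': "a' < b'" "b' < length xs" "xs ! a' = s'" "xs ! b' = s'"
    and "s \<noteq> s'"
  shows "\<exists>u. topple_step (xs[a := s - 1, b := s + 1]) u \<and> topple_step (xs[a' := s' - 1, b' := s' + 1]) u"
proof -
  let ?y = "xs[a := s - 1, b := s + 1]" and ?z = "xs[a' := s' - 1, b' := s' + 1]"
  have d: "a \<noteq> a'" "a \<noteq> b'" "b \<noteq> a'" "b \<noteq> b'"
    using ab ab' assms(9) by metis+
  define u where "u = xs[a := s - 1, b := s + 1, a' := s' - 1, b' := s' + 1]"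
  have y_nth: "?y ! a' = s'" "?y ! b' = s'" and z_nth: "?z ! a = s" "?z ! b = s"
    using d ab ab' by simp_all
  have "u = ?y[a' := ?y ! a' - 1, b' := ?y ! b' + 1]"
    unfolding u_def y_nth ..
  then have "topple_step ?y u"
    unfolding topple_step_def using ab'(1,2) y_nth by (intro exI[of _ a'] exI[of _ b']) simp
  moreover have "u = ?z[a := ?z ! a - 1, b := ?z ! b + 1]"
    unfolding u_def z_nth using d ab ab' by (intro nth_equalityI) (auto simp: nth_list_update)
  then have "topple_step ?z u"
    unfolding topple_step_def using ab(1,2) z_nth by (intro exI[of _ a] exI[of _ b]) simp
  ultimately show ?thesis
    by blast
qed

text \<open>Under the invariant at most two chips share a site, so two steps on the same site coincide,
  while steps on different sites commute.\<close>

lemma topple_step_diamond: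
  assumes "topple_inv xs" and "topple_step xs y" and "topple_step xs z"
  shows "y = z \<or> (\<exists>u. topple_step y u \<and> topple_step z u)"
proof -
  obtain a b where ab: "a < b" "b < length xs" "xs ! a = xs ! b"
    and y: "y = xs[a := xs ! a - 1, b := xs ! b + 1]"
    using assms(2) unfolding topple_step_def by blast
  obtain a' b' where ab': "a' < b'" "b' < length xs" "xs ! a' = xs ! b'"
    and z: "z = xs[a' := xs ! a' - 1, b' := xs ! b' + 1]"
    using assms(3) unfolding topple_step_def by blast
  define s s' where "s = xs ! b" and "s' = xs ! b'"
  have s: "xs ! a = s" "xs ! b = s" and s': "xs ! a' = s'" "xs ! b' = s'"
    using ab(3) ab'(3) by (simp_all add: s_def s'_def)
  show ?thesis
  proof (cases "s = s'")
    case True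
    have "count (mset xs) s \<le> 2"
      using assms(1) doubles_separatedD(1) unfolding topple_inv_def by blast
    then have "a = a' \<and> b = b'"
      using index_pair_unique[OF _ ab(1,2) s ab'(1,2) s'[folded True]] by blast
    then show ?thesis
      unfolding y z by simp
  next
    case False
    then show ?thesis
      using topple_steps_commute[OF ab(1,2) s ab'(1,2) s'] unfolding y z s s' by blast
  qed
qed

abbreviation topple_step_inv :: "int list \<Rightarrow> int list \<Rightarrow> bool" where
  "topple_step_inv xs ys \<equiv> topple_inv xs \<and> topple_step xs ys"

lemma confluentp_topple_step_inv: "confluentp topple_step_inv"
proof (rule strong_confluentp_imp_confluentp, rule strong_confluentpI)
  fix xs y z assume "topple_step_inv xs y" and "topple_step_inv xs z"
  then have inv: "topple_inv y" "topple_inv z"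
    using topple_inv_step by blast+
  from \<open>topple_step_inv xs y\<close> \<open>topple_step_inv xs z\<close>
  consider "y = z" | u where "topple_step y u" and "topple_step z u"
    using topple_step_diamond by blast
  then show "\<exists>u. topple_step_inv\<^sup>*\<^sup>* y u \<and> topple_step_inv\<^sup>=\<^sup>= z u"
  proof cases
    case 1
    then show ?thesis by blast
  next
    case 2
    then show ?thesis using inv by blast
  qed
qed

lemma rtranclp_topple_step_inv:
  assumes "topple_step\<^sup>*\<^sup>* xs ys" and "topple_inv xs"
  shows "topple_step_inv\<^sup>*\<^sup>* xs ys"
  using assms
proof (induction rule: rtranclp_induct)
  case (step ys zs)
  then have "topple_inv ys"
    using topple_inv_steps by blast
  with step show ?case
    by (simp add: rtranclp.rtrancl_into_rtrancl)
qed simp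

lemma distinct_topple_normal_form:
  assumes "distinct ys" and "topple_step_inv\<^sup>*\<^sup>* ys zs"
  shows "zs = ys"
proof -
  have "\<not> topple_step ys u" for u
    using assms(1) unfolding topple_step_def by (auto simp: nth_eq_iff_index_eq)
  with assms(2) show ?thesis
    by (cases rule: converse_rtranclpE) auto
qed

lemma topple_normal_form_unique:
  assumes "topple_inv xs" and "topple_step\<^sup>*\<^sup>* xs ys" and "topple_step\<^sup>*\<^sup>* xs zs"
    and "distinct ys" and "distinct zs"
  shows "ys = zs"
proof -
  obtain u where "topple_step_inv\<^sup>*\<^sup>* ys u" and "topple_step_inv\<^sup>*\<^sup>* zs u"
    using confluentpD[OF confluentp_topple_step_inv] rtranclp_topple_step_inv assms(1-3) by blast
  then show ?thesis
    using distinct_topple_normal_form assms(4,5) by metis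
qed

section \<open>Toppling a configuration\<close>

definition occupies :: "int list \<Rightarrow> nat list \<Rightarrow> int \<Rightarrow> bool" where
  "occupies xs ls s \<longleftrightarrow> (\<forall>b<length ls. xs ! (ls ! b - 1) = s + int b)"

lemma occupies_Nil [simp]: "occupies xs [] s"
  by (simp add: occupies_def)

lemma occupies_Cons [simp]: "occupies xs (l # ls) s \<longleftrightarrow> xs ! (l - 1) = s \<and> occupies xs ls (s + 1)"
  unfolding occupies_def by (auto simp: All_less_Suc2 algebra_simps)

lemma occupies_frame:
  assumes "occupies xs ls s" and "set ls \<subseteq> A" and "\<And>l. l \<in> A \<Longrightarrow> ys ! (l - 1) = xs ! (l - 1)"
  shows "occupies ys ls s"
  using assms unfolding occupies_def by (metis nth_mem subsetD)

lemma topple_labels: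
  assumes "lo < hi" and "1 \<le> lo" and "hi \<le> length xs" and "xs ! (lo - 1) = s" and "xs ! (hi - 1) = s"
  shows "topple_step xs (xs[lo - 1 := s - 1, hi - 1 := s + 1])"
    and "xs[lo - 1 := s - 1, hi - 1 := s + 1] ! (lo - 1) = s - 1"
    and "xs[lo - 1 := s - 1, hi - 1 := s + 1] ! (hi - 1) = s + 1"
    and "l \<in> {1..length xs} - {lo, hi} \<Longrightarrow> xs[lo - 1 := s - 1, hi - 1 := s + 1] ! (l - 1) = xs ! (l - 1)"
proof -
  show "topple_step xs (xs[lo - 1 := s - 1, hi - 1 := s + 1])"
    unfolding topple_step_def using assms by (intro exI[of _ "lo - 1"] exI[of _ "hi - 1"]) auto
  show "xs[lo - 1 := s - 1, hi - 1 := s + 1] ! (lo - 1) = s - 1"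
    and "xs[lo - 1 := s - 1, hi - 1 := s + 1] ! (hi - 1) = s + 1"
    using assms by simp_all
  show "xs[lo - 1 := s - 1, hi - 1 := s + 1] ! (l - 1) = xs ! (l - 1)" if "l \<in> {1..length xs} - {lo, hi}"
    using that assms by (auto simp: nth_list_update)
qed

lemma bubble_topples:
  assumes "distinct (c # rs)" and "set (c # rs) \<subseteq> {1..length xs}"
    and "xs ! (c - 1) = s" and "occupies xs rs s"
  shows "\<exists>ys. topple_step\<^sup>*\<^sup>* xs ys \<and> length ys = length xs
    \<and> occupies ys (fst (bubble c rs)) (s - 1) \<and> ys ! (snd (bubble c rs) - 1) = s + int (length rs)
    \<and> (\<forall>l\<in>{1..length xs} - set (c # rs). ys ! (l - 1) = xs ! (l - 1))"
  using assms
proof (induction rs arbitrary: c s xs)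
  case Nil
  then show ?case by auto
next
  case (Cons r rs)
  define lo hi where "lo = min c r" and "hi = max c r"
  have lohi: "lo < hi" "{lo, hi} = {c, r}"
    using Cons.prems(1) unfolding lo_def hi_def by auto
  have "1 \<le> lo" "hi \<le> length xs" "xs ! (lo - 1) = s" "xs ! (hi - 1) = s"
    using Cons.prems(2-4) lohi(2) by (auto simp: doubleton_eq_iff)
  note xs1 = topple_labels[OF lohi(1) this]
  define xs1 where "xs1 = xs[lo - 1 := s - 1, hi - 1 := s + 1]"
  have "distinct (hi # rs)" and "set (hi # rs) \<subseteq> {1..length xs1}"
    using Cons.prems(1,2) lohi(2) by (auto simp: xs1_def hi_def max_def)
  moreover have "occupies xs1 rs (s + 1)"
    by (rule occupies_frame[OF _ _ xs1(4)[folded xs1_def]]) (use Cons.prems(1,2,4) lohi(2) in auto)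
  ultimately obtain ys where ys: "topple_step\<^sup>*\<^sup>* xs1 ys" "length ys = length xs1"
      "occupies ys (fst (bubble hi rs)) s" "ys ! (snd (bubble hi rs) - 1) = s + 1 + int (length rs)"
      "\<forall>l\<in>{1..length xs1} - set (hi # rs). ys ! (l - 1) = xs1 ! (l - 1)"
    using Cons.IH[of hi xs1 "s + 1"] xs1(3) unfolding xs1_def by auto
  have "bubble c (r # rs) = (lo # fst (bubble hi rs), snd (bubble hi rs))"
    by (simp add: lo_def hi_def)
  moreover have "ys ! (lo - 1) = s - 1"
    using ys(5) xs1(2) Cons.prems(1,2) lohi unfolding xs1_def by (auto simp: hi_def lo_def)
  moreover have "ys ! (l - 1) = xs ! (l - 1)" if "l \<in> {1..length xs} - set (c # r # rs)" for l
    using that ys(5) xs1(4) lohi(2) unfolding xs1_def by auto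
  ultimately show ?case
    using xs1(1) ys unfolding xs1_def
    by (intro exI[of _ ys]) (auto simp: algebra_simps converse_rtranclp_into_rtranclp)
qed

lemma bubbles_topple:
  assumes "distinct (ls @ rs)" and "set (ls @ rs) \<subseteq> {1..length xs}"
    and "occupies xs ls s" and "occupies xs rs (s + int (length ls) - 1)"
  shows "\<exists>ys. topple_step\<^sup>*\<^sup>* xs ys \<and> length ys = length xs
    \<and> occupies ys (fst (bubbles ls rs)) (s - 1) \<and> occupies ys (snd (bubbles ls rs)) (s + int (length rs))
    \<and> (\<forall>l\<in>{1..length xs} - set (ls @ rs). ys ! (l - 1) = xs ! (l - 1))"
  using assms
proof (induction ls arbitrary: s xs)
  case Nil
  then show ?case by auto
next
  case (Cons v ls)
  let ?F = "fst (bubbles ls rs)" and ?S = "snd (bubbles ls rs)"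
  obtain ys1 where ys1: "topple_step\<^sup>*\<^sup>* xs ys1" "length ys1 = length xs"
      "occupies ys1 ?F s" "occupies ys1 ?S (s + 1 + int (length rs))"
      "\<forall>l\<in>{1..length xs} - set (ls @ rs). ys1 ! (l - 1) = xs ! (l - 1)"
    using Cons.IH[of xs "s + 1"] Cons.prems by (auto simp: algebra_simps)
  have mset_FS: "mset (?F @ ?S) = mset (ls @ rs)"
    by (rule mset_bubbles)
  then have dFS: "distinct (?F @ ?S)" and sFS: "set (?F @ ?S) = set (ls @ rs)"
    using Cons.prems(1) mset_eq_imp_distinct_iff[OF mset_FS] mset_eq_setD[OF mset_FS] by auto
  have "distinct (v # ?F)" and "set (v # ?F) \<subseteq> {1..length ys1}"
    using Cons.prems(1,2) dFS sFS ys1(2) by auto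
  moreover have "ys1 ! (v - 1) = s"
    using ys1(5) Cons.prems(1-3) by auto
  ultimately obtain ys where ys: "topple_step\<^sup>*\<^sup>* ys1 ys" "length ys = length ys1"
      "occupies ys (fst (bubble v ?F)) (s - 1)" "ys ! (snd (bubble v ?F) - 1) = s + int (length rs)"
      "\<forall>l\<in>{1..length ys1} - set (v # ?F). ys ! (l - 1) = ys1 ! (l - 1)"
    using bubble_topples[of v ?F ys1 s] ys1(3) by auto
  have "set ?S \<subseteq> {1..length ys1} - set (v # ?F)"
    using dFS sFS Cons.prems(1,2) ys1(2) by auto
  then have "occupies ys ?S (s + 1 + int (length rs))"
    using ys(5) by (intro occupies_frame[OF ys1(4)]) auto
  moreover have "\<forall>l\<in>{1..length xs} - set ((v # ls) @ rs). ys ! (l - 1) = xs ! (l - 1)"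
    using ys(5) ys1(2,5) sFS by auto
  ultimately show ?case
    using ys ys1 by (intro exI[of _ ys]) (auto simp: algebra_simps intro: rtranclp_trans)
qed

lemma occupies_iff_map:
  "occupies xs ls s \<longleftrightarrow> map (\<lambda>l. xs ! (l - 1)) ls = [s..s + int (length ls) - 1]"
  unfolding occupies_def list_eq_iff_nth_eq by auto

lemma map_nth_pred_upt: "map (\<lambda>l. xs ! (l - 1)) [1..<length xs + 1] = xs"
  by (rule nth_equalityI) (simp_all del: upt_Suc)

lemma map_read_perm: "map (\<lambda>l. xs ! (l - 1)) (read_perm xs) = sort xs"
proof (rule properties_for_sort[symmetric])
  show "mset (map (\<lambda>l. xs ! (l - 1)) (read_perm xs)) = mset xs"
    unfolding read_perm_def mset_map mset_sort by (metis mset_map map_nth_pred_upt)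
qed (simp add: read_perm_def sorted_sort_key)

lemma mset_read_perm: "mset (read_perm xs) = mset [1..<length xs + 1]"
  by (simp add: read_perm_def)

lemma read_perm_eqI:
  assumes "mset \<pi> = mset [1..<length ys + 1]"
    and sorted: "sorted_wrt (<) (map (\<lambda>l. ys ! (l - 1)) \<pi>)"
  shows "read_perm ys = \<pi>" and "distinct ys"
proof -
  let ?key = "\<lambda>l. ys ! (l - 1)"
  have "distinct (map ?key \<pi>)"
    using sorted by (simp add: strict_sorted_iff)
  then have "inj_on ?key (set [1..<length ys + 1])"
    using mset_eq_setD[OF assms(1)] by (simp add: distinct_map)
  then show "read_perm ys = \<pi>"
    unfolding read_perm_def using assms by (intro sort_key_inj_key_eq) (simp_all add: strict_sorted_iff)
  have "mset ys = mset (map ?key \<pi>)"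
    using assms(1) map_nth_pred_upt[of ys] by (metis mset_map)
  then show "distinct ys"
    using mset_eq_imp_distinct_iff \<open>distinct (map ?key \<pi>)\<close> by blast
qed

definition initial_sites :: "nat \<Rightarrow> nat \<Rightarrow> int list" where
  "initial_sites m p = [1..int p] @ [int p..int m]"

lemma count_initial_sites:
  assumes "1 \<le> p" and "p \<le> m"
  shows "count (mset (initial_sites m p)) s =
    (if s = int p then 2 else if 1 \<le> s \<and> s \<le> int m then 1 else 0)"
proof -
  have "count (mset [a..b]) s = (if a \<le> s \<and> s \<le> b then 1 else 0)" for a b :: int
    using distinct_count_atmost_1[of "[a..b]"] by simp
  then show ?thesis
    unfolding initial_sites_def using assms by simp
qed

lemma length_initial_sites: "p \<le> m \<Longrightarrow> length (initial_sites m p) = m + 1"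
  by (simp add: initial_sites_def)

lemma nth_initial_sites:
  "t \<le> m \<Longrightarrow> initial_sites m p ! t = (if t < p then int t + 1 else int t)"
  unfolding initial_sites_def by (auto simp: nth_append)

lemma config_S_iff:
  assumes "1 \<le> p" and "p \<le> m"
  shows "xs \<in> config_S m p \<longleftrightarrow> length xs = m + 1 \<and> mset xs = mset (initial_sites m p)"
proof (cases "length xs = m + 1")
  case True
  then have "card {a. a < m + 1 \<and> xs ! a = s} = count (mset xs) s" for s
    using card_nth_eq_count[of xs s] by simp
  with True show ?thesis
    unfolding config_S_def multiset_eq_iff count_initial_sites[OF assms] by simp
qed (simp add: config_S_def)

lemma topple_inv_config:
  assumes "1 \<le> p" and "p \<le> m" and "xs \<in> config_S m p"
  shows "topple_inv xs"
proof -
  have "count (mset xs) t = (if t = int p then 2 else if 1 \<le> t \<and> t \<le> int m then 1 else 0)" for t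
    using assms config_S_iff[OF assms(1,2)] count_initial_sites[OF assms(1,2)] by simp
  then show ?thesis
    unfolding topple_inv_def doubles_separated_def by auto
qed

lemma map_read_perm_config:
  assumes "1 \<le> p" and "p \<le> m" and "xs \<in> config_S m p"
  shows "map (\<lambda>l. xs ! (l - 1)) (read_perm xs) = initial_sites m p"
proof -
  have "sort xs = initial_sites m p"
  proof (rule properties_for_sort)
    show "mset (initial_sites m p) = mset xs"
      using assms config_S_iff[OF assms(1,2)] by simp
    show "sorted (initial_sites m p)"
      by (simp add: initial_sites_def sorted_append)
  qed
  then show ?thesis
    using map_read_perm[of xs] by simp
qed

definition toppled_word :: "nat \<Rightarrow> nat list \<Rightarrow> nat list" where
  "toppled_word p w = fst (bubble_split p w) @ snd (bubble_split p w)"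

lemma config_topples_to_toppled_word:
  assumes "1 \<le> p" and "p \<le> m" and xs: "xs \<in> config_S m p"
  shows "\<exists>ys. topple_step\<^sup>*\<^sup>* xs ys \<and> distinct ys \<and> read_perm ys = toppled_word p (read_perm xs)"
proof -
  let ?w = "read_perm xs" and ?key = "\<lambda>l. xs ! (l - 1)"
  let ?F = "fst (bubbles (take p ?w) (drop p ?w))" and ?S = "snd (bubbles (take p ?w) (drop p ?w))"
  have len: "length xs = m + 1"
    using xs config_S_iff[OF assms(1,2)] by simp
  have mset_w: "mset ?w = mset [1..<length xs + 1]"
    by (rule mset_read_perm)
  have len_w: "length ?w = m + 1"
    using mset_eq_length[OF mset_w] len by simp
  have dw: "distinct ?w"
    using mset_eq_imp_distinct_iff[OF mset_w] by simp
  have set_w: "set ?w = {1..length xs}"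
    using mset_eq_setD[OF mset_w] by (simp del: upt_Suc add: atLeastLessThanSuc_atLeastAtMost)
  have "map ?key (take p ?w) @ map ?key (drop p ?w) = [1..int p] @ [int p..int m]"
    using map_read_perm_config[OF assms] unfolding initial_sites_def by (simp flip: map_append)
  moreover have "length (map ?key (take p ?w)) = length [1..int p]"
    using len_w assms(2) by simp
  ultimately have "map ?key (take p ?w) = [1..int p]" and "map ?key (drop p ?w) = [int p..int m]"
    by (simp_all add: append_eq_append_conv)
  then have "occupies xs (take p ?w) 1" and "occupies xs (drop p ?w) (1 + int (length (take p ?w)) - 1)"
    using len_w assms(2) unfolding occupies_iff_map by (simp_all add: of_nat_diff)
  moreover have "distinct (take p ?w @ drop p ?w)" and "set (take p ?w @ drop p ?w) \<subseteq> {1..length xs}"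
    using dw set_w by simp_all
  ultimately obtain ys where ys: "topple_step\<^sup>*\<^sup>* xs ys" "length ys = length xs"
      "occupies ys ?F (1 - 1)" "occupies ys ?S (1 + int (length (drop p ?w)))"
    using bubbles_topple[of "take p ?w" "drop p ?w" xs 1] by blast
  have "mset (?F @ ?S) = mset [1..<length ys + 1]"
    using mset_bubbles[of "take p ?w" "drop p ?w"] mset_w ys(2) by simp
  moreover have "sorted_wrt (<) (map (\<lambda>l. ys ! (l - 1)) (?F @ ?S))"
    using ys(3,4) unfolding occupies_iff_map by (simp add: sorted_wrt_append)
  ultimately have "read_perm ys = ?F @ ?S" and "distinct ys"
    by (rule read_perm_eqI)+
  with ys(1) show ?thesis
    unfolding toppled_word_def bubble_split_def by blast
qed

lemma topples_to_iff:
  assumes "1 \<le> p" and "p \<le> m" and "xs \<in> config_S m p"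
  shows "topples_to xs \<pi> \<longleftrightarrow> \<pi> = toppled_word p (read_perm xs)"
proof -
  obtain ys where ys: "topple_step\<^sup>*\<^sup>* xs ys" "distinct ys" "read_perm ys = toppled_word p (read_perm xs)"
    using config_topples_to_toppled_word[OF assms] by blast
  have "zs = ys" if "topple_step\<^sup>*\<^sup>* xs zs" and "distinct zs" for zs
    using topple_normal_form_unique[OF topple_inv_config[OF assms] that(1) ys(1) that(2) ys(2)] .
  then show ?thesis
    using ys unfolding topples_to_def stable_config_def by blast
qed

section \<open>Counting configurations\<close>

lemma bubbles_swap_last: "bubbles (xs @ [a]) (b # ys) = bubbles (xs @ [b]) (a # ys)"
  by (induction xs) (simp_all add: min.commute max.commute)

definition swap_at :: "nat \<Rightarrow> 'a list \<Rightarrow> 'a list" where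
  "swap_at p w = w[p - 1 := w ! p, p := w ! (p - 1)]"

lemma mset_swap_at: "1 \<le> p \<Longrightarrow> p < length w \<Longrightarrow> mset (swap_at p w) = mset w"
  using mset_swap[of p w "p - 1"] by (simp add: swap_at_def)

lemma nth_swap_at:
  assumes "1 \<le> p" and "p < length w"
  shows "swap_at p w ! (p - 1) = w ! p" and "swap_at p w ! p = w ! (p - 1)"
  using assms by (simp_all add: swap_at_def nth_list_update)

lemma swap_at_swap_at: "1 \<le> p \<Longrightarrow> p < length w \<Longrightarrow> swap_at p (swap_at p w) = w"
  by (auto intro!: nth_equalityI simp: swap_at_def nth_list_update)

lemma take_drop_swap_at:
  assumes "1 \<le> p" and "p < length w"
  shows "take p (swap_at p w) = take (p - 1) w @ [w ! p]"
    and "drop p (swap_at p w) = w ! (p - 1) # drop (Suc p) w"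
proof -
  have "take p (swap_at p w) = take (p - 1) (swap_at p w) @ [swap_at p w ! (p - 1)]"
    using assms take_Suc_conv_app_nth[of "p - 1" "swap_at p w"] by (simp add: swap_at_def)
  then show "take p (swap_at p w) = take (p - 1) w @ [w ! p]"
    using assms nth_swap_at(1) by (simp add: swap_at_def)
  have "drop p (swap_at p w) = swap_at p w ! p # drop (Suc p) (swap_at p w)"
    using assms Cons_nth_drop_Suc[of p "swap_at p w"] by (simp add: swap_at_def)
  then show "drop p (swap_at p w) = w ! (p - 1) # drop (Suc p) w"
    using assms nth_swap_at(2) by (simp add: swap_at_def)
qed

lemma toppled_word_swap_at:
  assumes "1 \<le> p" and "p < length w"
  shows "toppled_word p (swap_at p w) = toppled_word p w"
proof -
  have "take p w = take (p - 1) w @ [w ! (p - 1)]"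
    using assms take_Suc_conv_app_nth[of "p - 1" w] by simp
  moreover have "drop p w = w ! p # drop (Suc p) w"
    using assms Cons_nth_drop_Suc[of p w] by simp
  ultimately show ?thesis
    unfolding toppled_word_def bubble_split_def take_drop_swap_at[OF assms] by (simp only: bubbles_swap_last)
qed

lemma sort_key_nth_less_if_key_eq:
  assumes "sorted_wrt (<) xs" and "i < j" and "j < length xs"
    and "f (sort_key f xs ! i) = f (sort_key f xs ! j)"
  shows "sort_key f xs ! i < sort_key f xs ! j"
proof -
  let ?ys = "sort_key f xs" and ?P = "\<lambda>y. f y = f (sort_key f xs ! i)"
  have filter_rev: "sorted_wrt R (filter P zs) \<Longrightarrow> sorted_wrt (\<lambda>x y. P x \<longrightarrow> P y \<longrightarrow> R x y) zs"
    for R P zs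
    by (induction zs) (auto split: if_splits)
  have "sorted_wrt (<) (filter ?P ?ys)"
    unfolding sort_key_stable by (rule sorted_wrt_filter[OF assms(1)])
  then have "sorted_wrt (\<lambda>x y. ?P x \<longrightarrow> ?P y \<longrightarrow> x < y) ?ys"
    by (rule filter_rev)
  then show ?thesis
    using assms(2-4) unfolding sorted_wrt_iff_nth_less by simp
qed

lemma sort_key_eqI:
  fixes w xs :: "'a::linorder list" and f :: "'a \<Rightarrow> 'b::linorder"
  assumes "mset w = mset xs" and "sorted_wrt (<) xs" and "sorted (map f w)"
    and ties: "\<And>i j. i < j \<Longrightarrow> j < length w \<Longrightarrow> f (w ! i) = f (w ! j) \<Longrightarrow> w ! i < w ! j"
  shows "sort_key f xs = w"
proof (rule properties_for_sort_key[OF assms(1) _ assms(3)])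
  fix k
  let ?P = "\<lambda>x. f k = f x"
  have "sorted_wrt (<) (filter ?P xs)"
    using assms(2) by (rule sorted_wrt_filter)
  moreover have "sorted_wrt (\<lambda>x y. f x = f y \<longrightarrow> x < y) w"
    unfolding sorted_wrt_iff_nth_less using ties by blast
  then have "sorted_wrt (\<lambda>x y. f x = f y \<longrightarrow> x < y) (filter ?P w)"
    by (rule sorted_wrt_filter)
  then have "sorted_wrt (<) (filter ?P w)"
    by (rule sorted_wrt_mono_rel[rotated]) simp
  moreover have "set (filter ?P w) = set (filter ?P xs)"
    using mset_eq_setD[OF assms(1)] by simp
  ultimately show "filter ?P w = filter ?P xs"
    by (rule strict_sorted_equal)
qed

lemma read_perm_double_site_less:
  assumes "1 \<le> p" and "p \<le> m" and "xs \<in> config_S m p"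
  shows "read_perm xs ! (p - 1) < read_perm xs ! p"
proof -
  have len: "length (read_perm xs) = m + 1"
    using assms config_S_iff[of p m xs] mset_eq_length[OF mset_read_perm[of xs]] by simp
  have "xs ! (read_perm xs ! t - 1) = initial_sites m p ! t" if "t \<le> m" for t
    using arg_cong[OF map_read_perm_config[OF assms], of "\<lambda>ks. ks ! t"] that len by simp
  then have "xs ! (read_perm xs ! (p - 1) - 1) = xs ! (read_perm xs ! p - 1)"
    using assms(1,2) by (simp add: nth_initial_sites)
  then show ?thesis
    using sort_key_nth_less_if_key_eq[of "[1..<length xs + 1]" "p - 1" p] assms(1,2) len
    unfolding read_perm_def by (simp del: upt_Suc)
qed

definition index_of :: "'a list \<Rightarrow> 'a \<Rightarrow> nat" where
  "index_of w l = (LEAST t. t < length w \<and> w ! t = l)"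

lemma index_of_nth: "distinct w \<Longrightarrow> t < length w \<Longrightarrow> index_of w (w ! t) = t"
  unfolding index_of_def by (rule Least_equality) (auto simp: nth_eq_iff_index_eq)

lemma nth_index_of: "l \<in> set w \<Longrightarrow> index_of w l < length w \<and> w ! index_of w l = l"
  unfolding index_of_def by (rule LeastI_ex) (simp add: in_set_conv_nth)

text \<open>The configuration whose reading word is \<open>w\<close>: chip \<open>w ! t\<close> is put on the \<open>t\<close>-th occupied site.\<close>

definition config_of_word :: "nat \<Rightarrow> nat \<Rightarrow> nat list \<Rightarrow> int list" where
  "config_of_word m p w = map (\<lambda>a. initial_sites m p ! index_of w (Suc a)) [0..<m + 1]"

lemma map_config_of_word:
  assumes "p \<le> m" and w: "mset w = mset [1..<m + 2]"
  shows "map (\<lambda>l. config_of_word m p w ! (l - 1)) w = initial_sites m p"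
proof (rule nth_equalityI)
  have dw: "distinct w"
    using mset_eq_imp_distinct_iff[OF w] by simp
  have len: "length w = m + 1"
    using mset_eq_length[OF w] by simp
  show "length (map (\<lambda>l. config_of_word m p w ! (l - 1)) w) = length (initial_sites m p)"
    using len length_initial_sites[OF assms(1)] by simp
  fix t assume "t < length (map (\<lambda>l. config_of_word m p w ! (l - 1)) w)"
  then have t: "t < length w"
    by simp
  then have "w ! t \<in> {1..<m + 2}"
    using mset_eq_setD[OF w] nth_mem by (metis set_upt)
  then have "w ! t - 1 < m + 1" and "Suc (w ! t - 1) = w ! t"
    by auto
  then show "map (\<lambda>l. config_of_word m p w ! (l - 1)) w ! t = initial_sites m p ! t"
    using index_of_nth[OF dw t] t by (simp del: upt_Suc add: config_of_word_def)
qed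

lemma config_of_word_correct:
  assumes "1 \<le> p" and "p \<le> m" and w: "mset w = mset [1..<m + 2]" and "w ! (p - 1) < w ! p"
  shows "config_of_word m p w \<in> config_S m p" and "read_perm (config_of_word m p w) = w"
proof -
  let ?xs = "config_of_word m p w" and ?key = "\<lambda>l. config_of_word m p w ! (l - 1)"
  have len: "length ?xs = m + 1"
    by (simp add: config_of_word_def)
  have key: "map ?key w = initial_sites m p"
    by (rule map_config_of_word[OF assms(2) w])
  have "mset ?xs = mset (map ?key [1..<m + 2])"
    using map_nth_pred_upt[of ?xs] len by simp
  also have "\<dots> = mset (map ?key w)"
    by (simp only: mset_map w)
  also have "\<dots> = mset (initial_sites m p)"
    unfolding key ..
  finally show "?xs \<in> config_S m p"
    using config_S_iff[OF assms(1,2)] len by simp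
  have "sort_key ?key [1..<m + 2] = w"
  proof (rule sort_key_eqI[OF w])
    show "sorted (map ?key w)"
      unfolding key by (simp add: initial_sites_def sorted_append)
    fix i j assume ij: "i < j" "j < length w" and "?key (w ! i) = ?key (w ! j)"
    moreover have "?key (w ! t) = initial_sites m p ! t" if "t < length w" for t
      using arg_cong[OF key, of "\<lambda>ks. ks ! t"] that by simp
    ultimately have "initial_sites m p ! i = initial_sites m p ! j"
      by simp
    then have "i = p - 1" and "j = p"
      using ij mset_eq_length[OF w] assms(1,2) by (auto simp: nth_initial_sites split: if_splits)
    then show "w ! i < w ! j"
      using assms(4) by simp
  qed (simp del: upt_Suc)
  then show "read_perm ?xs = w"
    unfolding read_perm_def len by simp
qed

lemma config_of_word_read_perm:
  assumes "1 \<le> p" and "p \<le> m" and "xs \<in> config_S m p"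
  shows "config_of_word m p (read_perm xs) = xs"
proof -
  let ?w = "read_perm xs"
  have len: "length xs = m + 1"
    using assms config_S_iff[of p m xs] by simp
  have w: "mset ?w = mset [1..<m + 2]"
    using mset_read_perm[of xs] len by simp
  show ?thesis
  proof (rule nth_equalityI)
    fix a assume "a < length (config_of_word m p ?w)"
    then have a: "Suc a \<in> set ?w"
      using mset_eq_setD[OF w] by (simp del: upt_Suc add: config_of_word_def)
    let ?t = "index_of ?w (Suc a)"
    have "?t < length ?w" and "?w ! ?t = Suc a"
      using nth_index_of[OF a] by simp_all
    then have "xs ! a = initial_sites m p ! ?t"
      using arg_cong[OF map_read_perm_config[OF assms], of "\<lambda>ks. ks ! ?t"] by simp
    then show "config_of_word m p ?w ! a = xs ! a"
      using \<open>a < length (config_of_word m p ?w)\<close> by (simp del: upt_Suc add: config_of_word_def)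
  qed (simp add: config_of_word_def len)
qed

lemma card_config_topples_to:
  assumes "1 \<le> p" and "p \<le> m"
  shows "card {xs \<in> config_S m p. topples_to xs \<pi>} =
    card {w. mset w = mset [1..<m + 2] \<and> w ! (p - 1) < w ! p \<and> toppled_word p w = \<pi>}"
    (is "card ?A = card ?B")
proof (rule bij_betw_same_card)
  show "bij_betw read_perm ?A ?B"
  proof (rule bij_betw_byWitness[where f' = "config_of_word m p"])
    show "\<forall>xs\<in>?A. config_of_word m p (read_perm xs) = xs"
      using config_of_word_read_perm[OF assms] by blast
    show "\<forall>w\<in>?B. read_perm (config_of_word m p w) = w"
      using config_of_word_correct(2)[OF assms] by blast
    show "read_perm ` ?A \<subseteq> ?B"
    proof
      fix w assume "w \<in> read_perm ` ?A"
      then obtain xs where xs: "xs \<in> config_S m p" "topples_to xs \<pi>" and w: "w = read_perm xs"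
        by blast
      have "length xs = m + 1"
        using xs(1) config_S_iff[OF assms] by simp
      then show "w \<in> ?B"
        using mset_read_perm[of xs] read_perm_double_site_less[OF assms xs(1)]
          topples_to_iff[OF assms xs(1)] xs(2) w by simp
    qed
    show "config_of_word m p ` ?B \<subseteq> ?A"
      using config_of_word_correct[OF assms] topples_to_iff[OF assms] by auto
  qed
qed

lemma card_toppled_word_double:
  assumes "1 \<le> p" and "p \<le> m"
  shows "card {w. mset w = mset [1..<m + 2] \<and> toppled_word p w = \<pi>} =
    2 * card {w. mset w = mset [1..<m + 2] \<and> w ! (p - 1) < w ! p \<and> toppled_word p w = \<pi>}"
proof -
  let ?P = "\<lambda>w. mset w = mset [1..<m + 2] \<and> toppled_word p w = \<pi>"
  let ?B = "{w. mset w = mset [1..<m + 2] \<and> w ! (p - 1) < w ! p \<and> toppled_word p w = \<pi>}"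
  let ?B' = "{w. mset w = mset [1..<m + 2] \<and> w ! p < w ! (p - 1) \<and> toppled_word p w = \<pi>}"
  have range: "1 \<le> p" "p < length w" if "?P w" for w
    using that assms mset_eq_length[of w "[1..<m + 2]"] by auto
  have "w ! (p - 1) \<noteq> w ! p" if "?P w" for w
    using that range[OF that] mset_eq_imp_distinct_iff[of w "[1..<m + 2]"] by (simp add: nth_eq_iff_index_eq)
  then have "w ! (p - 1) < w ! p \<or> w ! p < w ! (p - 1)" if "?P w" for w
    using that by (simp add: neq_iff)
  then have "{w. ?P w} = ?B \<union> ?B'"
    by blast
  moreover have "finite ?B" and "finite ?B'"
    by (rule finite_subset[OF _ finite_mset_eq[of "mset [1..<m + 2]"]], blast)+
  moreover have "?B \<inter> ?B' = {}"
    by auto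
  ultimately have "card {w. ?P w} = card ?B + card ?B'"
    by (simp only: card_Un_disjoint)
  moreover have "card ?B' = card ?B"
  proof (rule bij_betw_same_card[of "swap_at p"], rule bij_betw_byWitness[where f' = "swap_at p"])
    have swap: "?P (swap_at p w) \<and> swap_at p w ! (p - 1) = w ! p \<and> swap_at p w ! p = w ! (p - 1)
        \<and> swap_at p (swap_at p w) = w" if "?P w" for w
      using that mset_swap_at[OF range[OF that]] nth_swap_at[OF range[OF that]]
        swap_at_swap_at[OF range[OF that]] toppled_word_swap_at[OF range[OF that]] by simp
    show "swap_at p ` ?B' \<subseteq> ?B" and "swap_at p ` ?B \<subseteq> ?B'"
      using swap by auto
    show "\<forall>w\<in>?B'. swap_at p (swap_at p w) = w" and "\<forall>w\<in>?B. swap_at p (swap_at p w) = w"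
      using swap by auto
  qed
  ultimately show ?thesis
    by simp
qed

lemma toppled_word_eq_iff:
  "toppled_word p w = \<pi> \<longleftrightarrow> bubble_split p w = (take (length w - p) \<pi>, drop (length w - p) \<pi>)"
  unfolding toppled_word_def append_eq_conv_conj prod_eq_iff by (simp add: bubble_split_def)

lemma words_toppling_to_eq_fiber:
  assumes "mset \<pi> = mset [1..<m + 2]"
  shows "{w. mset w = mset [1..<m + 2] \<and> toppled_word p w = \<pi>} =
    {w. bubble_split p w = (take (m + 1 - p) \<pi>, drop (m + 1 - p) \<pi>)}"
proof (intro equalityI subsetI)
  fix w assume "w \<in> {w. mset w = mset [1..<m + 2] \<and> toppled_word p w = \<pi>}"
  then show "w \<in> {w. bubble_split p w = (take (m + 1 - p) \<pi>, drop (m + 1 - p) \<pi>)}"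
    using mset_eq_length[of w "[1..<m + 2]"] toppled_word_eq_iff[of p w \<pi>] by (simp del: upt_Suc)
next
  fix w assume "w \<in> {w. bubble_split p w = (take (m + 1 - p) \<pi>, drop (m + 1 - p) \<pi>)}"
  then have split: "bubble_split p w = (take (m + 1 - p) \<pi>, drop (m + 1 - p) \<pi>)"
    by simp
  then have "mset w = mset [1..<m + 2]"
    using mset_bubble_split[of p w] assms by (simp del: upt_Suc)
  moreover have "toppled_word p w = \<pi>"
    using split mset_eq_length[OF calculation] toppled_word_eq_iff[of p w \<pi>] by (simp del: upt_Suc)
  ultimately show "w \<in> {w. mset w = mset [1..<m + 2] \<and> toppled_word p w = \<pi>}"
    by simp
qed

lemma card_config_topples_to_eq_fiber:
  assumes "1 \<le> p" and "p \<le> m" and "mset \<pi> = mset [1..<m + 2]"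
  shows "2 * card {xs \<in> config_S m p. topples_to xs \<pi>} =
    card {w. bubble_split p w = (take (m + 1 - p) \<pi>, drop (m + 1 - p) \<pi>)}"
proof -
  have "2 * card {xs \<in> config_S m p. topples_to xs \<pi>} =
      2 * card {w. mset w = mset [1..<m + 2] \<and> w ! (p - 1) < w ! p \<and> toppled_word p w = \<pi>}"
    unfolding card_config_topples_to[OF assms(1,2)] ..
  also have "\<dots> = card {w. mset w = mset [1..<m + 2] \<and> toppled_word p w = \<pi>}"
    unfolding card_toppled_word_double[OF assms(1,2)] ..
  finally show ?thesis
    unfolding words_toppling_to_eq_fiber[OF assms(3)] .
qed

lemma topples_to_split_less:
  assumes "1 \<le> p" and "p \<le> m" and "xs \<in> config_S m p" and "topples_to xs \<pi>"
  shows "\<forall>a\<in>set (take (m + 1 - p) \<pi>). \<forall>b\<in>set (drop (m + 1 - p) \<pi>). a < b"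
proof (rule bubble_split_less)
  have w: "mset (read_perm xs) = mset [1..<m + 2]"
    using assms(3) config_S_iff[OF assms(1,2)] mset_read_perm[of xs] by simp
  then show "distinct (read_perm xs)"
    using mset_eq_imp_distinct_iff[OF w] by simp
  have "toppled_word p (read_perm xs) = \<pi>"
    using topples_to_iff[OF assms(1-3)] assms(4) by simp
  then show "bubble_split p (read_perm xs) = (take (m + 1 - p) \<pi>, drop (m + 1 - p) \<pi>)"
    using toppled_word_eq_iff mset_eq_length[OF w] by (simp del: upt_Suc)
qed

theorem theorem2p12:
  fixes n p i j :: nat and \<pi> :: "nat list"
  assumes "n \<ge> 2" and "1 \<le> p" and "p \<le> n - 1"
    and "is_perm n \<pi>" and "p_resultant n p \<pi>"
    and "ltr_maxima (take (n - p) \<pi>) = i"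
    and "rtl_minima (drop (n - p) \<pi>) = j"
  shows "real (card {xs \<in> config_S (n - 1) p. topples_to xs \<pi>}) = real (poly_bernoulli_B i j) / 2"
proof -
  define m where "m = n - 1"
  have n: "n = m + 1" and p: "1 \<le> p" "p \<le> m"
    using assms(1-3) by (auto simp: m_def)
  have \<pi>: "mset \<pi> = mset [1..<m + 2]"
    using assms(4) by (simp add: is_perm_def n)
  obtain xs where "xs \<in> config_S m p" and "topples_to xs \<pi>"
    using assms(5) by (auto simp: p_resultant_def m_def)
  then have less: "\<forall>a\<in>set (take (n - p) \<pi>). \<forall>b\<in>set (drop (n - p) \<pi>). a < b"
    using topples_to_split_less[OF p] by (simp add: n)
  have "length (drop (n - p) \<pi>) = p" and "distinct (take (n - p) \<pi> @ drop (n - p) \<pi>)"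
    using mset_eq_length[OF \<pi>] mset_eq_imp_distinct_iff[OF \<pi>] p by (simp_all del: upt_Suc add: n)
  then have "card {w. bubble_split p w = (take (n - p) \<pi>, drop (n - p) \<pi>)} = poly_bernoulli_B i j"
    using card_bubble_split_fiber[OF _ _ less] assms(6,7) by simp
  then have "2 * card {xs \<in> config_S m p. topples_to xs \<pi>} = poly_bernoulli_B i j"
    using card_config_topples_to_eq_fiber[OF p \<pi>] by (simp add: n)
  then show ?thesis
    by (simp add: m_def field_simps flip: of_nat_mult)
qed

end
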